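(* Let $q\ge2$, $r\ge1$, $\rho\ge 2$ be integers, $N=r+\rho-1$, and let $\mathcal{C}$ be a $q$-ary $(n,k,r,\rho)$ LRC code with minimum distance $d$. Let $\mu=\lceil (n-(d-1))/N\rceil+1$. Then: (1) (locality-dependent Hamming bound) $$k\le \mu\Big(N-\log_q\Big(\sum_{e=0}^{\lfloor(\rho-1)/2\rfloor}\binom Ne (q-1)^e\Big)\Big);$$ (2) (locality-dependent Plotkin bound) if $\rho>\frac{q-1}{q}N$, then $$k\le \mu\log_q\frac{\rho}{\rho-\frac{q-1}{q}N};$$ (3) (locality-dependent Singleton bound) $$k\le \mu r.$$
   Context: A $q$-ary code of length $n$ is a subset $\mathcal{C}\subseteq Q^n$, $|Q|=q$; its minimum distance is the minimum Hamming distance between distinct codewords and its dimension is $k=\log_q|\mathcal{C}|$. For $I\subseteq[n]$, $\mathcal{C}_I$ is the projection of $\mathcal{C}$ onto the coordinates in $I$. $\mathcal{C}$ (of cardinality $q^k$) is an $(n,k,r,\rho)$ LRC code if every coordinate $i\in[n]$ lies in a subset $\mathcal{R}_i\subseteq[n]$ of size at most $r+\rho-1$ such that $\mathcal{C}_{\mathcal{R}_i}$ has minimum distance at least $\rho$. *)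

theory Defs
  imports "HOL-Library.FuncSet" Complex_Main
begin

text \<open>Words of length n over alphabet Q are extensional functions from {1..n} to Q.
  Hamming distance restricted to an index set I.\<close>
definition hdist :: "nat set \<Rightarrow> (nat \<Rightarrow> 'a) \<Rightarrow> (nat \<Rightarrow> 'a) \<Rightarrow> nat" where
  "hdist I x y = card {i \<in> I. x i \<noteq> y i}"

definition proj :: "(nat \<Rightarrow> 'a) set \<Rightarrow> nat set \<Rightarrow> (nat \<Rightarrow> 'a) set" where
  "proj C I = (\<lambda>c. restrict c I) ` C"

definition min_dist_ge :: "nat set \<Rightarrow> (nat \<Rightarrow> 'a) set \<Rightarrow> nat \<Rightarrow> bool" where
  "min_dist_ge I C \<rho> \<longleftrightarrow> (\<forall>x\<in>C. \<forall>y\<in>C. x \<noteq> y \<longrightarrow> hdist I x y \<ge> \<rho>)"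

definition has_min_dist :: "nat set \<Rightarrow> (nat \<Rightarrow> 'a) set \<Rightarrow> nat \<Rightarrow> bool" where
  "has_min_dist I C d \<longleftrightarrow> min_dist_ge I C d \<and>
     (\<exists>x\<in>C. \<exists>y\<in>C. x \<noteq> y \<and> hdist I x y = d)"

definition is_code :: "'a set \<Rightarrow> nat \<Rightarrow> (nat \<Rightarrow> 'a) set \<Rightarrow> bool" where
  "is_code Q n C \<longleftrightarrow> C \<subseteq> (PiE {1..n} (\<lambda>_. Q))"

definition is_LRC :: "'a set \<Rightarrow> nat \<Rightarrow> real \<Rightarrow> nat \<Rightarrow> nat \<Rightarrow> (nat \<Rightarrow> 'a) set \<Rightarrow> bool" where
  "is_LRC Q n k r \<rho> C \<longleftrightarrow> is_code Q n C \<and> real (card C) = real (card Q) powr k \<and>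
     (\<forall>i\<in>{1..n}. \<exists>R. i \<in> R \<and> R \<subseteq> {1..n} \<and> card R \<le> r + \<rho> - 1 \<and>
        min_dist_ge R (proj C R) \<rho>)"

end

theory Submission
  imports Defs "HOL-Analysis.Convex"
begin

text \<open>Every coordinate lies in a local group of at most \<open>N\<close> coordinates on which the code
  projects to a code of minimum distance \<open>\<rho>\<close>. A code of length \<open>a \<le> N\<close> and minimum distance
  \<open>\<rho>\<close> has at most \<open>q\<^bsup>c a\<^esup>\<close> words, where \<open>c N\<close> is the classical Hamming, Plotkin or Singleton
  bound at length \<open>N\<close>: for the Singleton bound this is linear arithmetic, for the other two it
  follows from the log-concavity of the corresponding bound as a function of the length.
  Adding local groups greedily produces a set \<open>U\<close> of \<open>n - d + 1\<close> to \<open>n - d + N\<close> coordinates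
  on which the projection has at most \<open>q\<^bsup>c |U|\<^esup>\<close> words, since each new group contributes at
  most \<open>q\<^sup>c\<close> per new coordinate. As \<open>n - d + 1\<close> coordinates determine a codeword,
  \<open>k \<le> c (n - d + N) \<le> \<mu> c N\<close>.\<close>

section \<open>Hamming distance\<close>

lemma hdist_commute: "hdist I x y = hdist I y x"
  unfolding hdist_def by (metis (mono_tags, lifting) Collect_cong)

lemma hdist_triangle:
  assumes "finite I"
  shows "hdist I x z \<le> hdist I x y + hdist I y z"
proof -
  have "{i\<in>I. x i \<noteq> z i} \<subseteq> {i\<in>I. x i \<noteq> y i} \<union> {i\<in>I. y i \<noteq> z i}" by auto
  hence "card {i\<in>I. x i \<noteq> z i} \<le> card ({i\<in>I. x i \<noteq> y i} \<union> {i\<in>I. y i \<noteq> z i})"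
    using assms by (intro card_mono) auto
  also have "\<dots> \<le> card {i\<in>I. x i \<noteq> y i} + card {i\<in>I. y i \<noteq> z i}" by (rule card_Un_le)
  finally show ?thesis unfolding hdist_def .
qed

lemma hdist_le_card_Diff:
  assumes "finite I" and "\<forall>i\<in>J. x i = y i"
  shows "hdist I x y \<le> card (I - J)"
  unfolding hdist_def using assms by (intro card_mono) auto

lemma inj_on_restrict_min_dist:
  assumes "finite I" and "min_dist_ge I F \<delta>" and "card (I - J) < \<delta>"
  shows "inj_on (\<lambda>x. restrict x J) F"
proof (rule inj_onI, rule ccontr)
  fix x y assume "x \<in> F" "y \<in> F" "restrict x J = restrict y J" "x \<noteq> y"
  hence "\<delta> \<le> hdist I x y" and "\<forall>i\<in>J. x i = y i"
    using assms(2) by (auto simp: min_dist_ge_def fun_eq_iff restrict_def split: if_splits)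
  with hdist_le_card_Diff[OF assms(1)] assms(3) show False by (meson le_less_trans not_le)
qed

lemma proj_subset_PiE:
  assumes "C \<subseteq> PiE I (\<lambda>_. Q)" and "J \<subseteq> I"
  shows "proj C J \<subseteq> PiE J (\<lambda>_. Q)"
  using assms unfolding proj_def by (fastforce simp: PiE_iff)

lemma has_min_dist_bounds:
  assumes "C \<subseteq> PiE {1..n} (\<lambda>_. Q)" and "has_min_dist {1..n} C d"
  shows "1 \<le> d" and "d \<le> n"
proof -
  obtain x y where xy: "x \<in> C" "y \<in> C" "x \<noteq> y" "hdist {1..n} x y = d"
    using assms(2) unfolding has_min_dist_def by auto
  have "\<exists>j\<in>{1..n}. x j \<noteq> y j"
    using xy assms(1) PiE_ext[of x "{1..n}" "\<lambda>_. Q" y] by blast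
  thus "1 \<le> d" using xy(4) unfolding hdist_def by (auto simp: Suc_le_eq card_gt_0_iff)
  have "card {j\<in>{1..n}. x j \<noteq> y j} \<le> card {1..n}" by (intro card_mono) auto
  thus "d \<le> n" using xy(4) unfolding hdist_def by simp
qed

section \<open>Bounds for a single code\<close>

lemma singleton_bound:
  assumes "finite D" and "finite Q" and "F \<subseteq> PiE D (\<lambda>_. Q)" and "min_dist_ge D F \<delta>" and "\<delta> \<ge> 1"
  shows "card F \<le> card Q ^ (card D - (\<delta> - 1))"
proof -
  obtain D' where D': "D' \<subseteq> D" "card D' = card D - (\<delta> - 1)"
    using obtain_subset_with_card_n[of "card D - (\<delta> - 1)" D] by auto
  have "finite D'" using D' assms(1) finite_subset by blast
  have "card (D - D') < \<delta>" using D' assms(5) \<open>finite D'\<close> by (simp add: card_Diff_subset)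
  hence "card F = card ((\<lambda>x. restrict x D') ` F)"
    using inj_on_restrict_min_dist[OF assms(1,4)] by (simp add: card_image)
  also have "\<dots> \<le> card (PiE D' (\<lambda>_. Q))"
    using assms(2,3) D' \<open>finite D'\<close>
    by (intro card_mono) (auto simp: finite_PiE PiE_iff dest!: subsetD[OF assms(3)])
  also have "\<dots> = card Q ^ card D'" using \<open>finite D'\<close> by (simp add: card_PiE)
  finally show ?thesis using D' by simp
qed

text \<open>The volume of a Hamming ball of radius \<open>t - 1\<close> in words of length \<open>a\<close> over an alphabet
  of size \<open>p + 1\<close>; the radius is offset by one so that the recursions below need no case split.\<close>
definition hamming_vol :: "real \<Rightarrow> nat \<Rightarrow> nat \<Rightarrow> real" where
  "hamming_vol p t a = (\<Sum>e<t. real (a choose e) * p ^ e)"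

lemma card_hamming_sphere:
  fixes x :: "nat \<Rightarrow> 'a"
  assumes "finite D" and "finite Q" and x: "x \<in> PiE D (\<lambda>_. Q)" and "E \<subseteq> D"
  shows "card {w \<in> PiE D (\<lambda>_. Q). {i\<in>D. w i \<noteq> x i} = E} = (card Q - 1) ^ card E"
proof -
  define ext where "ext g = (\<lambda>i. if i \<in> E then g i else x i)" for g :: "nat \<Rightarrow> 'a"
  have xi: "i \<notin> D \<Longrightarrow> x i = undefined" "i \<in> D \<Longrightarrow> x i \<in> Q" for i
    using x by (auto simp: PiE_iff extensional_def)
  have eq: "{w \<in> PiE D (\<lambda>_. Q). {i\<in>D. w i \<noteq> x i} = E} = ext ` PiE E (\<lambda>i. Q - {x i})"
  proof (intro equalityI subsetI)
    fix w assume w: "w \<in> {w \<in> PiE D (\<lambda>_. Q). {i\<in>D. w i \<noteq> x i} = E}"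
    have "w = ext (restrict w E)"
    proof
      fix i show "w i = ext (restrict w E) i"
        using w xi[of i] assms(4) by (cases "i \<in> D") (auto simp: ext_def PiE_iff extensional_def)
    qed
    moreover have "restrict w E \<in> PiE E (\<lambda>i. Q - {x i})" using w assms(4) by (auto simp: PiE_iff)
    ultimately show "w \<in> ext ` PiE E (\<lambda>i. Q - {x i})" by blast
  next
    fix w assume "w \<in> ext ` PiE E (\<lambda>i. Q - {x i})"
    then obtain g where g: "g \<in> PiE E (\<lambda>i. Q - {x i})" and w: "w = ext g" by auto
    have "w \<in> PiE D (\<lambda>_. Q)"
      using g assms(4) xi unfolding w ext_def by (auto simp: PiE_iff extensional_def)
    moreover have "{i\<in>D. w i \<noteq> x i} = E"
      using g assms(4) unfolding w ext_def by (auto simp: PiE_iff)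
    ultimately show "w \<in> {w \<in> PiE D (\<lambda>_. Q). {i\<in>D. w i \<noteq> x i} = E}" by blast
  qed
  have "inj_on ext (PiE E (\<lambda>i. Q - {x i}))"
  proof (rule inj_onI)
    fix g h assume g: "g \<in> PiE E (\<lambda>i. Q - {x i})" and h: "h \<in> PiE E (\<lambda>i. Q - {x i})"
      and "ext g = ext h"
    hence "\<forall>i\<in>E. g i = h i" unfolding ext_def by metis
    thus "g = h" using g h by (metis PiE_ext)
  qed
  hence "card {w \<in> PiE D (\<lambda>_. Q). {i\<in>D. w i \<noteq> x i} = E} = card (PiE E (\<lambda>i. Q - {x i}))"
    unfolding eq by (rule card_image)
  also have "\<dots> = (\<Prod>i\<in>E. card (Q - {x i}))"
    using finite_subset[OF assms(4,1)] by (rule card_PiE)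
  also have "\<dots> = (\<Prod>i\<in>E. card Q - 1)"
    using xi assms(2,4) by (intro prod.cong) (auto simp: card_Diff_singleton)
  also have "\<dots> = (card Q - 1) ^ card E" by simp
  finally show ?thesis .
qed

lemma hamming_vol_le_card_ball:
  fixes x :: "nat \<Rightarrow> 'a"
  assumes D: "finite D" and Q: "finite Q" "card Q \<ge> 1" and x: "x \<in> PiE D (\<lambda>_. Q)"
  shows "hamming_vol (real (card Q) - 1) (Suc t) (card D)
    \<le> real (card {w \<in> PiE D (\<lambda>_. Q). hdist D w x \<le> t})"
proof -
  define S where "S E = {w \<in> PiE D (\<lambda>_. Q). {i\<in>D. w i \<noteq> x i} = E}" for E
  define P where "P e = {E. E \<subseteq> D \<and> card E = e}" for e
  have finP: "finite (P e)" for e unfolding P_def using D by (auto intro: finite_subset[of _ "Pow D"])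
  have finPi: "finite (PiE D (\<lambda>_. Q))" using D Q by (simp add: finite_PiE)
  have "card (\<Union>E\<in>(\<Union>e\<le>t. P e). S E) = (\<Sum>E\<in>(\<Union>e\<le>t. P e). card (S E))"
    using finP finPi by (intro card_UN_disjoint) (auto simp: S_def)
  also have "\<dots> = (\<Sum>e\<le>t. \<Sum>E\<in>P e. card (S E))"
    using finP by (intro sum.UNION_disjoint) (auto simp: P_def)
  also have "\<dots> = (\<Sum>e\<le>t. (card D choose e) * (card Q - 1) ^ e)"
    using card_hamming_sphere[OF D Q(1) x] n_subsets[OF D] by (simp add: S_def P_def)
  finally have c: "card (\<Union>E\<in>(\<Union>e\<le>t. P e). S E) = (\<Sum>e\<le>t. (card D choose e) * (card Q - 1) ^ e)" .
  have "(\<Union>E\<in>(\<Union>e\<le>t. P e). S E) \<subseteq> {w \<in> PiE D (\<lambda>_. Q). hdist D w x \<le> t}"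
    unfolding S_def P_def hdist_def by auto
  hence "card (\<Union>E\<in>(\<Union>e\<le>t. P e). S E) \<le> card {w \<in> PiE D (\<lambda>_. Q). hdist D w x \<le> t}"
    using finPi by (intro card_mono) auto
  hence "(\<Sum>e\<le>t. (card D choose e) * (card Q - 1) ^ e) \<le> card {w \<in> PiE D (\<lambda>_. Q). hdist D w x \<le> t}"
    unfolding c .
  moreover have "hamming_vol (real (card Q) - 1) (Suc t) (card D)
      = real (\<Sum>e\<le>t. (card D choose e) * (card Q - 1) ^ e)"
    unfolding hamming_vol_def lessThan_Suc_atMost using Q(2) by (simp add: of_nat_diff)
  ultimately show ?thesis by (simp only: of_nat_le_iff)
qed

lemma hamming_bound:
  assumes D: "finite D" and Q: "finite Q" "card Q \<ge> 1"
    and F: "F \<subseteq> PiE D (\<lambda>_. Q)" and md: "min_dist_ge D F \<delta>" and t: "2 * t + 1 \<le> \<delta>"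
  shows "real (card F) * hamming_vol (real (card Q) - 1) (Suc t) (card D) \<le> real (card Q) ^ card D"
proof -
  define B where "B x = {w \<in> PiE D (\<lambda>_. Q). hdist D w x \<le> t}" for x
  have finPi: "finite (PiE D (\<lambda>_. Q))" using D Q by (simp add: finite_PiE)
  have finF: "finite F" using F finPi finite_subset by blast
  have disj: "B x \<inter> B y = {}" if "x \<in> F" "y \<in> F" "x \<noteq> y" for x y
  proof (rule ccontr)
    assume "B x \<inter> B y \<noteq> {}"
    then obtain w where "hdist D w x \<le> t" "hdist D w y \<le> t" unfolding B_def by auto
    hence "hdist D x y \<le> 2 * t" using hdist_triangle[OF D, of x y w] hdist_commute[of D x w] by linarith
    moreover have "hdist D x y \<ge> \<delta>" using md that unfolding min_dist_ge_def by auto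
    ultimately show False using t by linarith
  qed
  have "real (card F) * hamming_vol (real (card Q) - 1) (Suc t) (card D)
      = (\<Sum>x\<in>F. hamming_vol (real (card Q) - 1) (Suc t) (card D))"
    by simp
  also have "\<dots> \<le> (\<Sum>x\<in>F. real (card (B x)))"
    unfolding B_def using hamming_vol_le_card_ball[OF D Q] F by (intro sum_mono) auto
  also have "\<dots> = real (card (\<Union>x\<in>F. B x))"
    using card_UN_disjoint[OF finF, of B] finPi disj unfolding B_def by simp
  also have "\<dots> \<le> real (card (PiE D (\<lambda>_. Q)))"
    using finPi unfolding B_def by (intro of_nat_mono card_mono) auto
  also have "\<dots> = real (card Q) ^ card D" using D by (simp add: card_PiE)
  finally show ?thesis .
qed

lemma sum_by_value:
  fixes g :: "'a \<Rightarrow> real" and F :: "(nat \<Rightarrow> 'a) set"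
  assumes "finite Q" and "finite F" and "\<forall>x\<in>F. x i \<in> Q"
  shows "(\<Sum>x\<in>F. g (x i)) = (\<Sum>v\<in>Q. real (card {x\<in>F. x i = v}) * g v)"
proof -
  have "(\<Sum>x\<in>F. g (x i)) = (\<Sum>x\<in>F. \<Sum>v\<in>Q. if x i = v then g v else 0)"
    using assms by (intro sum.cong refl) simp
  also have "\<dots> = (\<Sum>v\<in>Q. \<Sum>x\<in>F. if x i = v then g v else 0)" by (rule sum.swap)
  also have "\<dots> = (\<Sum>v\<in>Q. real (card {x\<in>F. x i = v}) * g v)"
    using assms(2) by (intro sum.cong refl) (simp add: sum.If_cases Int_def)
  finally show ?thesis .
qed

lemma sum_pairwise_hdist_ge:
  assumes "finite F" and "min_dist_ge D F \<delta>"
  shows "real (card F) * (real (card F) - 1) * real \<delta> \<le> (\<Sum>x\<in>F. \<Sum>y\<in>F. real (hdist D x y))"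
proof -
  have "(real (card F) - 1) * real \<delta> \<le> (\<Sum>y\<in>F. real (hdist D x y))" if x: "x \<in> F" for x
  proof -
    have "card F \<ge> 1" using assms(1) x by (metis One_nat_def Suc_leI card_gt_0_iff empty_iff)
    hence "(real (card F) - 1) * real \<delta> = (\<Sum>y\<in>F - {x}. real \<delta>)"
      using assms(1) x by (simp add: card_Diff_singleton of_nat_diff)
    also have "\<dots> \<le> (\<Sum>y\<in>F - {x}. real (hdist D x y))"
      using assms(2) x unfolding min_dist_ge_def by (intro sum_mono) auto
    also have "\<dots> \<le> (\<Sum>y\<in>F. real (hdist D x y))"
      using assms(1) by (intro sum_mono2) simp_all
    finally show ?thesis .
  qed
  hence "(\<Sum>x\<in>F. (real (card F) - 1) * real \<delta>) \<le> (\<Sum>x\<in>F. \<Sum>y\<in>F. real (hdist D x y))"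
    by (intro sum_mono) auto
  thus ?thesis by (simp add: mult.assoc)
qed

text \<open>In each coordinate at most a fraction \<open>(q - 1) / q\<close> of the ordered pairs disagree:
  the sum of squares of the value counts is at least \<open>M\<^sup>2 / q\<close> by Cauchy--Schwarz.\<close>
lemma sum_pairwise_disagree_le:
  fixes F :: "(nat \<Rightarrow> 'a) set"
  assumes Q: "finite Q" "card Q \<ge> 1" and F: "finite F" "\<forall>x\<in>F. x i \<in> Q"
  shows "(\<Sum>x\<in>F. \<Sum>y\<in>F. (if x i \<noteq> y i then 1 else 0 :: real))
    \<le> (real (card Q) - 1) / real (card Q) * real (card F)^2"
proof -
  define q where "q = real (card Q)"
  define M where "M = real (card F)"
  define n where "n v = real (card {y\<in>F. y i = v})" for v
  have q: "q > 0" using Q unfolding q_def by simp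
  have total: "(\<Sum>v\<in>Q. n v) = M"
    using sum_by_value[OF Q(1) F, of "\<lambda>_. 1"] unfolding M_def n_def by simp
  have "(\<Sum>x\<in>F. \<Sum>y\<in>F. (if x i \<noteq> y i then 1 else 0 :: real)) = (\<Sum>x\<in>F. M - n (x i))"
  proof (intro sum.cong refl)
    fix x assume "x \<in> F"
    have "(\<Sum>y\<in>F. (if x i \<noteq> y i then 1 else 0 :: real)) = (\<Sum>y\<in>F. 1 - (if y i = x i then 1 else 0))"
      by (intro sum.cong refl) auto
    also have "\<dots> = M - n (x i)"
      using F unfolding M_def n_def by (simp add: sum_subtractf sum.If_cases Int_def)
    finally show "(\<Sum>y\<in>F. (if x i \<noteq> y i then 1 else 0 :: real)) = M - n (x i)" .
  qed
  also have "\<dots> = M^2 - (\<Sum>v\<in>Q. n v * n v)"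
    using sum_by_value[OF Q(1) F, of n] unfolding n_def M_def by (simp add: sum_subtractf power2_eq_square)
  finally have disagree: "(\<Sum>x\<in>F. \<Sum>y\<in>F. (if x i \<noteq> y i then 1 else 0 :: real)) = M^2 - (\<Sum>v\<in>Q. n v * n v)" .
  have "0 \<le> (\<Sum>v\<in>Q. (n v - M / q)^2)" by (intro sum_nonneg) auto
  also have "\<dots> = (\<Sum>v\<in>Q. n v * n v - (2 * (M / q)) * n v + (M / q)^2)"
    by (intro sum.cong) (simp_all add: power2_eq_square algebra_simps)
  also have "\<dots> = (\<Sum>v\<in>Q. n v * n v) - 2 * (M / q) * (\<Sum>v\<in>Q. n v) + q * (M / q)^2"
    by (simp add: sum.distrib sum_subtractf sum_distrib_left q_def)
  also have "\<dots> = (\<Sum>v\<in>Q. n v * n v) - M^2 / q"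
    using q total by (simp add: power2_eq_square field_simps)
  finally have "M^2 / q \<le> (\<Sum>v\<in>Q. n v * n v)" by simp
  moreover have "(q - 1) / q * M^2 = M^2 - M^2 / q" using q by (simp add: field_simps)
  ultimately show ?thesis using disagree unfolding q_def M_def by linarith
qed

lemma plotkin_bound:
  fixes F :: "(nat \<Rightarrow> 'a) set"
  assumes D: "finite D" and Q: "finite Q" "card Q \<ge> 1"
    and F: "F \<subseteq> PiE D (\<lambda>_. Q)" and md: "min_dist_ge D F \<delta>"
    and big: "(real (card Q) - 1) / real (card Q) * real (card D) < real \<delta>"
  shows "real (card F) \<le> real \<delta> / (real \<delta> - (real (card Q) - 1) / real (card Q) * real (card D))"
proof -
  define \<theta> where "\<theta> = (real (card Q) - 1) / real (card Q)"
  define M where "M = real (card F)"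
  have finF: "finite F" using F D Q by (metis finite_PiE finite_subset)
  have "(\<Sum>x\<in>F. \<Sum>y\<in>F. real (hdist D x y))
      = (\<Sum>i\<in>D. \<Sum>x\<in>F. \<Sum>y\<in>F. (if x i \<noteq> y i then 1 else 0 :: real))"
  proof -
    have hd: "real (hdist D x y) = (\<Sum>i\<in>D. if x i \<noteq> y i then 1 else 0)" for x y
      unfolding hdist_def using D by (simp add: sum.If_cases Int_def)
    show ?thesis unfolding hd by (simp add: sum.swap[of _ D] sum.swap[of _ D F])
  qed
  also have "\<dots> \<le> (\<Sum>i\<in>D. \<theta> * M^2)"
    unfolding \<theta>_def M_def using F
    by (intro sum_mono sum_pairwise_disagree_le[OF Q finF]) (auto simp: PiE_iff)
  also have "\<dots> = real (card D) * \<theta> * M^2" by simp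
  finally have "M * ((M - 1) * real \<delta>) \<le> M * (real (card D) * \<theta> * M)"
    using sum_pairwise_hdist_ge[OF finF md] unfolding M_def by (simp add: power2_eq_square mult_ac)
  hence "M * (real \<delta> - \<theta> * real (card D)) \<le> real \<delta>"
  proof (cases "M = 0")
    case False
    hence "M > 0" unfolding M_def by simp
    with \<open>M * ((M - 1) * real \<delta>) \<le> M * (real (card D) * \<theta> * M)\<close>
    have "(M - 1) * real \<delta> \<le> real (card D) * \<theta> * M" by simp
    thus ?thesis by (simp add: algebra_simps)
  qed simp
  thus ?thesis using big unfolding \<theta>_def M_def by (simp add: pos_le_divide_eq mult.commute)
qed

section \<open>Log-concavity of Hamming ball volumes\<close>

lemma binomial_mult_Suc_le:
  assumes "e \<le> t"
  shows "(a choose e) * (a choose Suc t) \<le> (a choose Suc e) * (a choose t)"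
proof -
  have step: "Suc k * (a choose Suc k) = (a - k) * (a choose k)" for k
    by (metis binomial_absorb_comp binomial_absorption)
  have h: "(a - t) * Suc e \<le> (a - e) * Suc t"
    using assms by (intro mult_mono) auto
  have "((a choose e) * (a choose Suc t)) * (Suc e * Suc t)
      = (a choose e) * (a choose t) * ((a - t) * Suc e)"
    by (metis step mult.commute mult.left_commute)
  also have "\<dots> \<le> (a choose e) * (a choose t) * ((a - e) * Suc t)"
    using h by (intro mult_left_mono) auto
  also have "\<dots> = ((a choose Suc e) * (a choose t)) * (Suc e * Suc t)"
    by (metis step mult.commute mult.left_commute)
  finally show ?thesis by (metis mult_le_cancel2 zero_less_Suc mult_pos_pos)
qed

lemma hamming_vol_Suc_Suc:
  "hamming_vol p (Suc t) (Suc a) = hamming_vol p (Suc t) a + p * hamming_vol p t a"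
proof (induction t)
  case 0 then show ?case by (simp add: hamming_vol_def)
next
  case (Suc t)
  have "hamming_vol p (Suc (Suc t)) (Suc a)
      = hamming_vol p (Suc t) (Suc a) + real (Suc a choose Suc t) * p ^ Suc t"
    by (simp add: hamming_vol_def)
  also have "\<dots> = hamming_vol p (Suc t) a + p * hamming_vol p t a
      + (real (a choose t) + real (a choose Suc t)) * p ^ Suc t"
    using Suc by simp
  also have "\<dots> = hamming_vol p (Suc (Suc t)) a + p * hamming_vol p (Suc t) a"
    by (simp add: hamming_vol_def algebra_simps)
  finally show ?case .
qed

lemma hamming_vol_ge_1:
  assumes "p \<ge> 0"
  shows "hamming_vol p (Suc t) a \<ge> 1"
proof -
  have "hamming_vol p (Suc t) a = 1 + (\<Sum>e\<in>{1..<Suc t}. real (a choose e) * p ^ e)"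
    unfolding hamming_vol_def lessThan_atLeast0 by (simp add: sum.atLeast_Suc_lessThan)
  also have "\<dots> \<ge> 1" using assms by (intro add_increasing2 sum_nonneg) auto
  finally show ?thesis .
qed

lemma hamming_vol_log_concave_radius:
  assumes p: "p \<ge> 0"
  shows "hamming_vol p t a * hamming_vol p (Suc (Suc t)) a \<le> (hamming_vol p (Suc t) a)^2"
proof -
  define b where "b e = real (a choose e) * p ^ e" for e
  have V: "hamming_vol p s a = (\<Sum>e<s. b e)" for s by (simp add: hamming_vol_def b_def)
  have key: "b e * b (Suc t) \<le> b (Suc e) * b t" if "e \<le> t" for e
  proof -
    have "real (a choose e) * real (a choose Suc t) \<le> real (a choose Suc e) * real (a choose t)"
      using binomial_mult_Suc_le[OF that, of a] by (metis of_nat_le_iff of_nat_mult)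
    hence "real (a choose e) * real (a choose Suc t) * p ^ (e + Suc t)
        \<le> real (a choose Suc e) * real (a choose t) * p ^ (Suc e + t)"
      using p by (simp add: mult_right_mono)
    thus ?thesis by (simp only: b_def power_add mult_ac)
  qed
  have "(hamming_vol p (Suc t) a)^2 - hamming_vol p t a * hamming_vol p (Suc (Suc t)) a
        = hamming_vol p (Suc t) a * b t - hamming_vol p t a * b (Suc t)"
    by (simp add: V power2_eq_square algebra_simps)
  also have "hamming_vol p (Suc t) a * b t = b 0 * b t + (\<Sum>e<t. b (Suc e) * b t)"
    unfolding V by (subst sum.lessThan_Suc_shift) (simp add: sum_distrib_right distrib_right)
  also have "hamming_vol p t a * b (Suc t) = (\<Sum>e<t. b e * b (Suc t))"
    unfolding V by (simp add: sum_distrib_right)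
  finally have eq: "(hamming_vol p (Suc t) a)^2 - hamming_vol p t a * hamming_vol p (Suc (Suc t)) a
      = b 0 * b t + (\<Sum>e<t. b (Suc e) * b t - b e * b (Suc t))"
    by (simp add: sum_subtractf)
  have "0 \<le> b 0 * b t" using p by (simp add: b_def)
  moreover have "0 \<le> (\<Sum>e<t. b (Suc e) * b t - b e * b (Suc t))"
    using key by (intro sum_nonneg) auto
  ultimately show ?thesis using eq by linarith
qed

text \<open>Log-concavity in the radius, fed through the recursion \<open>hamming_vol_Suc_Suc\<close>,
  yields log-concavity in the length.\<close>
lemma hamming_vol_log_concave_length:
  assumes p: "p \<ge> 0"
  shows "hamming_vol p (Suc t) a * hamming_vol p (Suc t) (Suc (Suc a)) \<le> (hamming_vol p (Suc t) (Suc a))^2"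
proof (cases t)
  case 0 then show ?thesis by (simp add: hamming_vol_def)
next
  case (Suc s)
  define A where "A = hamming_vol p (Suc (Suc s)) a"
  define B where "B = hamming_vol p (Suc s) a"
  define C where "C = hamming_vol p s a"
  have 1: "hamming_vol p (Suc (Suc s)) (Suc a) = A + p * B"
    by (simp add: hamming_vol_Suc_Suc A_def B_def)
  have 2: "hamming_vol p (Suc (Suc s)) (Suc (Suc a)) = A + p * B + p * (B + p * C)"
    by (simp add: hamming_vol_Suc_Suc A_def B_def C_def)
  have "C * A \<le> B^2" using hamming_vol_log_concave_radius[OF p, of s a] by (simp add: A_def B_def C_def)
  hence "p^2 * (C * A) \<le> p^2 * B^2" by (intro mult_left_mono) auto
  thus ?thesis unfolding Suc 1 2 A_def[symmetric] by (simp add: power2_eq_square algebra_simps)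
qed

lemma log_concave_pow_le:
  fixes f :: "nat \<Rightarrow> real"
  assumes f0: "f 0 = 1" and fpos: "\<And>a. f a > 0"
    and lc: "\<And>a. f a * f (Suc (Suc a)) \<le> (f (Suc a))^2"
    and aN: "a \<le> N"
  shows "f N ^ a \<le> f a ^ N"
proof -
  define L where "L j = ln (f j)" for j
  define D where "D j = L (Suc j) - L j" for j
  have "D (Suc j) \<le> D j" for j
  proof -
    have "ln (f j * f (Suc (Suc j))) \<le> ln ((f (Suc j))^2)"
      using lc fpos[of j] fpos[of "Suc j"] fpos[of "Suc (Suc j)"] by (subst ln_le_cancel_iff) auto
    moreover have "f j \<noteq> 0" "f (Suc j) \<noteq> 0" "f (Suc (Suc j)) \<noteq> 0" using fpos by (metis less_irrefl)+
    ultimately show ?thesis unfolding D_def L_def by (simp add: ln_mult power2_eq_square)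
  qed
  hence Dmono: "j \<le> k \<Longrightarrow> D k \<le> D j" for j k
    by (metis decseqD decseq_SucI)
  have Lsum: "L j = (\<Sum>i<j. D i)" for j
    by (induction j) (simp_all add: L_def D_def f0)
  have main: "real a * L (a + m) \<le> real (a + m) * L a" for m
  proof (induction m)
    case 0 then show ?case by simp
  next
    case (Suc m)
    have "(\<Sum>i<a. D (a + m)) \<le> (\<Sum>i<a. D i)" by (intro sum_mono Dmono) auto
    hence "real a * D (a + m) \<le> L a" by (simp add: Lsum)
    moreover have "L (a + Suc m) = L (a + m) + D (a + m)" by (simp add: D_def)
    ultimately show ?case using Suc by (simp add: algebra_simps)
  qed
  obtain m where m: "N = a + m" using aN le_Suc_ex by blast
  have "ln (f N ^ a) \<le> ln (f a ^ N)"
    using main[of m] fpos unfolding m L_def by (simp add: ln_realpow)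
  thus ?thesis using fpos by (simp add: ln_le_cancel_iff)
qed

lemma hamming_vol_pow_le:
  assumes "p \<ge> 0" and "a \<le> N"
  shows "hamming_vol p (Suc t) N ^ a \<le> hamming_vol p (Suc t) a ^ N"
proof (rule log_concave_pow_le)
  show "hamming_vol p (Suc t) 0 = 1" unfolding hamming_vol_def by (subst sum.lessThan_Suc_shift) simp
  show "0 < hamming_vol p (Suc t) a" for a
    using hamming_vol_ge_1[OF assms(1), of t a] by simp
qed (use hamming_vol_log_concave_length[OF assms(1)] assms(2) in auto)

section \<open>Rate bounds for short codes\<close>

definition rate_bounded :: "'a set \<Rightarrow> nat \<Rightarrow> nat \<Rightarrow> real \<Rightarrow> bool" where
  "rate_bounded Q N \<delta> c \<longleftrightarrow> (\<forall>D F. finite D \<longrightarrow> card D \<le> N \<longrightarrow> F \<subseteq> PiE D (\<lambda>_. Q) \<longrightarrow>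
     min_dist_ge D F \<delta> \<longrightarrow> real (card F) \<le> real (card Q) powr (c * real (card D)))"

lemma rate_boundedI:
  assumes "\<And>D F. finite D \<Longrightarrow> card D \<le> N \<Longrightarrow> F \<subseteq> PiE D (\<lambda>_. Q) \<Longrightarrow> min_dist_ge D F \<delta>
    \<Longrightarrow> real (card F) \<le> real (card Q) powr (c * real (card D))"
  shows "rate_bounded Q N \<delta> c"
  using assms unfolding rate_bounded_def by blast

lemma rate_boundedD:
  assumes "rate_bounded Q N \<delta> c" and "finite D" and "card D \<le> N" and "F \<subseteq> PiE D (\<lambda>_. Q)"
    and "min_dist_ge D F \<delta>"
  shows "real (card F) \<le> real (card Q) powr (c * real (card D))"
  using assms unfolding rate_bounded_def by blast

text \<open>A single word on one coordinate is a code, so a rate bound cannot be negative.\<close>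
lemma rate_bounded_nonneg:
  assumes "rate_bounded Q N \<delta> c" and "N \<ge> 1" and "card Q \<ge> 2"
  shows "c \<ge> 0"
proof -
  obtain z where "z \<in> Q" using assms(3) by fastforce
  hence "{restrict (\<lambda>_. z) {1::nat}} \<subseteq> PiE {1} (\<lambda>_. Q)" by auto
  moreover have "min_dist_ge {1} {restrict (\<lambda>_. z) {1::nat}} \<delta>" by (simp add: min_dist_ge_def)
  ultimately have "real (card {restrict (\<lambda>_. z) {1::nat}}) \<le> real (card Q) powr (c * real (card {1::nat}))"
    using assms(2) by (intro rate_boundedD[OF assms(1)]) auto
  hence "real (card Q) powr 0 \<le> real (card Q) powr c" using assms(3) by simp
  thus ?thesis using assms(3) by (subst (asm) powr_le_cancel_iff) auto
qed

lemma rate_bounded_singleton: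
  assumes "finite Q" and "card Q \<ge> 1" and "\<delta> \<ge> 1"
  shows "rate_bounded Q (r + \<delta> - 1) \<delta> (real r / real (r + \<delta> - 1))"
proof (rule rate_boundedI)
  fix D :: "nat set" and F :: "(nat \<Rightarrow> 'a) set"
  assume D: "finite D" "card D \<le> r + \<delta> - 1" and F: "F \<subseteq> PiE D (\<lambda>_. Q)" "min_dist_ge D F \<delta>"
  define a where "a = card D"
  have "real (a - (\<delta> - 1)) * real (r + \<delta> - 1) \<le> real r * real a"
  proof (cases "a \<le> \<delta> - 1")
    case False
    hence "real r * real a - real (a - (\<delta> - 1)) * real (r + \<delta> - 1)
        = (real \<delta> - 1) * (real (r + \<delta> - 1) - real a)"
      using assms(3) by (simp add: of_nat_diff algebra_simps)
    also have "\<dots> \<ge> 0" using D assms(3) unfolding a_def by (intro mult_nonneg_nonneg) auto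
    finally show ?thesis by simp
  qed simp
  hence "real (a - (\<delta> - 1)) \<le> real r / real (r + \<delta> - 1) * real a"
    using D unfolding a_def by (cases "r + \<delta> - 1 = 0") (auto simp: field_simps)
  hence "real (card Q) powr real (a - (\<delta> - 1)) \<le> real (card Q) powr (real r / real (r + \<delta> - 1) * real a)"
    using assms(2) by (intro powr_mono) auto
  moreover have "real (card F) \<le> real (card Q) powr real (a - (\<delta> - 1))"
    using singleton_bound[OF D(1) assms(1) F assms(3)] assms(2) unfolding a_def
    by (simp add: powr_realpow flip: of_nat_power)
  ultimately show "real (card F) \<le> real (card Q) powr (real r / real (r + \<delta> - 1) * real (card D))"
    unfolding a_def by linarith
qed

lemma rate_bounded_hamming:
  assumes Q: "finite Q" "card Q \<ge> 2" and t: "2 * t + 1 \<le> \<delta>" and N: "N \<ge> 1"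
  defines "V \<equiv> hamming_vol (real (card Q) - 1) (Suc t)"
  shows "rate_bounded Q N \<delta> ((real N - log (real (card Q)) (V N)) / real N)"
proof (rule rate_boundedI)
  fix D :: "nat set" and F :: "(nat \<Rightarrow> 'a) set"
  assume D: "finite D" "card D \<le> N" and F: "F \<subseteq> PiE D (\<lambda>_. Q)" "min_dist_ge D F \<delta>"
  define q where "q = real (card Q)"
  define a where "a = card D"
  have q: "q > 1" using Q(2) unfolding q_def by simp
  have V: "V b > 0" for b
    using hamming_vol_ge_1[of "real (card Q) - 1" t b] Q(2) unfolding V_def by simp
  have "V N ^ a \<le> V a ^ N"
    unfolding V_def using Q(2) D(2) unfolding a_def by (intro hamming_vol_pow_le) auto
  hence "log q (V N ^ a) \<le> log q (V a ^ N)" using q V by simp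
  hence "real a * log q (V N) \<le> real N * log q (V a)" using V by (simp add: log_nat_power less_imp_le)
  hence "real a - log q (V a) \<le> (real N - log q (V N)) / real N * real a"
    using N by (simp add: field_simps)
  moreover have "real (card F) * V a \<le> q ^ a"
    using hamming_bound[OF D(1) Q(1) _ F t] Q(2) unfolding q_def a_def V_def by simp
  hence "real (card F) \<le> q powr (real a - log q (V a))"
    using q V by (simp add: powr_diff powr_realpow pos_le_divide_eq)
  ultimately show "real (card F) \<le> real (card Q) powr ((real N - log (real (card Q)) (V N)) / real N * real (card D))"
    unfolding q_def[symmetric] a_def[symmetric] using q by (meson order.trans powr_mono less_imp_le)
qed

lemma rate_bounded_plotkin:
  assumes Q: "finite Q" "card Q \<ge> 2" and N: "N \<ge> 1"
  defines "\<theta> \<equiv> (real (card Q) - 1) / real (card Q)"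
  assumes big: "\<theta> * real N < real \<delta>"
  shows "rate_bounded Q N \<delta> (log (real (card Q)) (real \<delta> / (real \<delta> - \<theta> * real N)) / real N)"
proof (rule rate_boundedI)
  fix D :: "nat set" and F :: "(nat \<Rightarrow> 'a) set"
  assume D: "finite D" "card D \<le> N" and F: "F \<subseteq> PiE D (\<lambda>_. Q)" "min_dist_ge D F \<delta>"
  define q where "q = real (card Q)"
  define a where "a = card D"
  define v where "v = real \<delta> - \<theta> * real N"
  define l where "l = real a / real N"
  have q: "q > 1" using Q(2) unfolding q_def by simp
  have \<theta>: "\<theta> \<ge> 0" unfolding \<theta>_def using Q(2) by simp
  have v: "v > 0" using big unfolding v_def by simp
  have l: "0 \<le> l" "l \<le> 1" unfolding l_def using D(2) N unfolding a_def by auto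
  have "\<theta> * real a \<le> \<theta> * real N" using \<theta> D(2) unfolding a_def by (intro mult_left_mono) auto
  hence w: "real \<delta> - \<theta> * real a > 0" using v unfolding v_def by linarith
  have \<delta>: "real \<delta> > 0" using w mult_nonneg_nonneg[OF \<theta> of_nat_0_le_iff[of a]] by linarith
  have mix: "real \<delta> - \<theta> * real a = (1 - l) * real \<delta> + l * v"
    unfolding l_def v_def using N by (simp add: field_simps)
  have "(1 - l) * log q (real \<delta>) + l * log q v \<le> log q (real \<delta> - \<theta> * real a)"
    unfolding mix using concave_onD[OF log_concave[OF q] l] \<delta> v by simp
  hence "log q (real \<delta> / (real \<delta> - \<theta> * real a)) \<le> log q (real \<delta> / v) / real N * real a"
    using \<delta> v w N unfolding l_def by (simp add: log_divide_pos field_simps)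
  moreover have "real (card F) \<le> real \<delta> / (real \<delta> - \<theta> * real a)"
    using plotkin_bound[OF D(1) Q(1) _ F] w Q(2) unfolding \<theta>_def a_def by simp
  ultimately show "real (card F) \<le> real (card Q) powr (log (real (card Q)) (real \<delta> / (real \<delta> - \<theta> * real N)) / real N * real (card D))"
    unfolding q_def[symmetric] a_def[symmetric] v_def[symmetric] using q \<delta> w
    by (simp add: log_le_iff[symmetric] order.trans)
qed

section \<open>From local groups to the whole code\<close>

lemma card_proj_Un_le:
  assumes "finite C"
  shows "card (proj C (U \<union> D)) \<le> (\<Sum>u\<in>proj C U. card (proj {x\<in>C. restrict x U = u} D))"
proof -
  define X where "X u = {x\<in>C. restrict x U = u}" for u
  define merge where "merge u g = (\<lambda>j. if j \<in> U then u j else g j)" for u g :: "nat \<Rightarrow> 'a"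
  have "proj (X u) (U \<union> D) \<subseteq> merge u ` proj (X u) D" for u
  proof
    fix w assume "w \<in> proj (X u) (U \<union> D)"
    then obtain x where x: "x \<in> X u" "w = restrict x (U \<union> D)" unfolding proj_def by auto
    have "w = merge u (restrict x D)"
      using x unfolding X_def merge_def by (auto simp: fun_eq_iff) (metis restrict_apply')
    thus "w \<in> merge u ` proj (X u) D" using x(1) unfolding proj_def by blast
  qed
  moreover have fin: "finite (proj (X u) D)" for u using assms unfolding X_def proj_def by simp
  ultimately have fiber: "card (proj (X u) (U \<union> D)) \<le> card (proj (X u) D)" for u
    by (meson card_image_le card_mono finite_imageI order_trans)
  have "proj C (U \<union> D) = (\<Union>u\<in>proj C U. proj (X u) (U \<union> D))"
    unfolding proj_def X_def by blast
  moreover have "finite (proj C U)" using assms unfolding proj_def by simp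
  ultimately have "card (proj C (U \<union> D)) \<le> (\<Sum>u\<in>proj C U. card (proj (X u) (U \<union> D)))"
    by (simp only: card_UN_le)
  also have "\<dots> \<le> (\<Sum>u\<in>proj C U. card (proj (X u) D))"
    by (intro sum_mono fiber)
  finally show ?thesis unfolding X_def .
qed

text \<open>Codewords that agree on \<open>U\<close> and differ on the local group \<open>R\<close> must differ on \<open>R - U\<close>.\<close>
lemma min_dist_ge_proj_fiber:
  assumes "min_dist_ge R (proj C R) \<delta>"
  shows "min_dist_ge (R - U) (proj {x\<in>C. restrict x U = u} (R - U)) \<delta>"
  unfolding min_dist_ge_def
proof (intro ballI impI)
  fix f g
  assume "f \<in> proj {x\<in>C. restrict x U = u} (R - U)" "g \<in> proj {x\<in>C. restrict x U = u} (R - U)"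
    and fg: "f \<noteq> g"
  then obtain x y where x: "x \<in> C" "restrict x U = u" "f = restrict x (R - U)"
    and y: "y \<in> C" "restrict y U = u" "g = restrict y (R - U)"
    unfolding proj_def by auto
  have agree: "x j = y j" if "j \<in> U" for j
    using x(2) y(2) that by (metis restrict_apply')
  have "restrict x R \<noteq> restrict y R"
  proof
    assume "restrict x R = restrict y R"
    hence "x j = y j" if "j \<in> R - U" for j using that by (metis DiffD1 restrict_apply')
    hence "f = g" unfolding x(3) y(3) by (intro restrict_ext) simp
    thus False using fg by contradiction
  qed
  moreover have "restrict x R \<in> proj C R" "restrict y R \<in> proj C R"
    using x(1) y(1) unfolding proj_def by auto
  ultimately have "\<delta> \<le> hdist R (restrict x R) (restrict y R)"
    using assms unfolding min_dist_ge_def by blast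
  moreover have "{j\<in>R. restrict x R j \<noteq> restrict y R j} = {j\<in>R - U. f j \<noteq> g j}"
    using agree x(3) y(3) by auto
  ultimately show "\<delta> \<le> hdist (R - U) f g" unfolding hdist_def by simp
qed

lemma card_proj_Un_local_le:
  fixes C :: "(nat \<Rightarrow> 'a) set"
  assumes rate: "rate_bounded Q N \<delta> c" and Q: "finite Q" and I: "finite I"
    and C: "C \<subseteq> PiE I (\<lambda>_. Q)" and U: "U \<subseteq> I"
    and R: "R \<subseteq> I" "card R \<le> N" "min_dist_ge R (proj C R) \<delta>"
    and pU: "real (card (proj C U)) \<le> real (card Q) powr (c * real (card U))"
  shows "real (card (proj C (U \<union> R))) \<le> real (card Q) powr (c * real (card (U \<union> R)))"
proof -
  define q where "q = real (card Q)"
  define D where "D = R - U"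
  have finC: "finite C" using finite_subset[OF C] I Q by (simp add: finite_PiE)
  have finR: "finite R" using finite_subset[OF R(1) I] .
  have D: "D \<subseteq> I" "finite D" using R(1) finR unfolding D_def by auto
  have "card D \<le> card R" unfolding D_def using finR by (intro card_mono) auto
  hence "card D \<le> N" using R(2) by linarith
  have fiber: "real (card (proj {x\<in>C. restrict x U = u} D)) \<le> q powr (c * real (card D))" for u
    unfolding q_def
  proof (rule rate_boundedD[OF rate D(2) \<open>card D \<le> N\<close>])
    show "proj {x\<in>C. restrict x U = u} D \<subseteq> PiE D (\<lambda>_. Q)"
      using C D(1) by (intro proj_subset_PiE) auto
    show "min_dist_ge D (proj {x\<in>C. restrict x U = u} D) \<delta>"
      unfolding D_def by (rule min_dist_ge_proj_fiber[OF R(3)])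
  qed
  have "U \<union> R = U \<union> D" unfolding D_def by blast
  have "real (card (proj C (U \<union> D))) \<le> (\<Sum>u\<in>proj C U. real (card (proj {x\<in>C. restrict x U = u} D)))"
    unfolding of_nat_sum[symmetric] of_nat_le_iff by (rule card_proj_Un_le[OF finC])
  also have "\<dots> \<le> real (card (proj C U)) * q powr (c * real (card D))"
    using sum_mono[OF fiber] by simp
  also have "\<dots> \<le> q powr (c * real (card U)) * q powr (c * real (card D))"
    using pU unfolding q_def by (intro mult_right_mono) auto
  also have "\<dots> = q powr (c * real (card (U \<union> D)))"
  proof -
    have "card (U \<union> D) = card U + card D"
      using finite_subset[OF U I] D(2) by (intro card_Un_disjoint) (auto simp: D_def)
    thus ?thesis by (simp add: powr_add[symmetric] algebra_simps)
  qed
  finally show ?thesis unfolding q_def \<open>U \<union> R = U \<union> D\<close> .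
qed

lemma exists_proj_card_le_powr:
  fixes C :: "(nat \<Rightarrow> 'a) set"
  assumes rate: "rate_bounded Q N \<delta> c" and N: "N \<ge> 1" and Q: "finite Q" "card Q \<ge> 1"
    and I: "finite I" and C: "C \<subseteq> PiE I (\<lambda>_. Q)"
    and local: "\<And>i. i \<in> I \<Longrightarrow> \<exists>R. i \<in> R \<and> R \<subseteq> I \<and> card R \<le> N \<and> min_dist_ge R (proj C R) \<delta>"
  shows "m \<le> card I \<Longrightarrow> \<exists>U\<subseteq>I. m \<le> card U \<and> card U \<le> m + N - 1 \<and>
    real (card (proj C U)) \<le> real (card Q) powr (c * real (card U))"
proof (induction m)
  case 0
  have "proj C {} \<subseteq> {\<lambda>_. undefined}" unfolding proj_def by auto
  hence "card (proj C {}) \<le> card {\<lambda>_::nat. undefined :: 'a}" by (intro card_mono) auto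
  thus ?case using Q(2) by (intro exI[of _ "{}"]) simp
next
  case (Suc m)
  then obtain U where U: "U \<subseteq> I" "m \<le> card U" "card U \<le> m + N - 1"
    "real (card (proj C U)) \<le> real (card Q) powr (c * real (card U))" by (meson Suc_leD)
  show ?case
  proof (cases "Suc m \<le> card U")
    case True
    moreover have "card U \<le> Suc m + N - 1" using U(3) N by linarith
    ultimately show ?thesis using U(1,4) by blast
  next
    case False
    have "\<not> I \<subseteq> U"
    proof
      assume "I \<subseteq> U"
      hence "card I \<le> card U" using finite_subset[OF U(1) I] by (rule card_mono[rotated])
      thus False using False U(2) Suc.prems by linarith
    qed
    then obtain i where i: "i \<in> I" "i \<notin> U" by blast
    then obtain R where R: "i \<in> R" "R \<subseteq> I" "card R \<le> N" "min_dist_ge R (proj C R) \<delta>"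
      using local by blast
    have fin: "finite U" "finite R" using finite_subset[OF U(1) I] finite_subset[OF R(2) I] by auto
    have "card (insert i U) \<le> card (U \<union> R)" using i R fin by (intro card_mono) auto
    moreover have "card (U \<union> R) \<le> card U + card R" by (rule card_Un_le)
    moreover have "real (card (proj C (U \<union> R))) \<le> real (card Q) powr (c * real (card (U \<union> R)))"
      by (rule card_proj_Un_local_le[OF rate Q(1) I C U(1) R(2-4) U(4)])
    moreover have "card (insert i U) = Suc (card U)" using i(2) fin(1) by simp
    ultimately have "Suc m \<le> card (U \<union> R)" "card (U \<union> R) \<le> Suc m + N - 1"
      using False U(2) R(3) by linarith+
    moreover have "U \<union> R \<subseteq> I" using U(1) R(2) by blast
    ultimately show ?thesis using \<open>real (card (proj C (U \<union> R))) \<le> _\<close> by blast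
  qed
qed

lemma add_div_le_ceiling_add_1:
  fixes x :: real
  assumes "N > 0"
  shows "(x + real N - 1) / real N \<le> real_of_int (\<lceil>x / real N\<rceil> + 1)"
proof -
  have "(x + real N - 1) / real N = x / real N + (real N - 1) / real N"
    using assms by (simp add: field_simps)
  moreover have "(real N - 1) / real N \<le> 1" using assms by (simp add: divide_le_eq_1)
  moreover have "x / real N \<le> real_of_int \<lceil>x / real N\<rceil>" by (rule le_of_int_ceiling)
  ultimately show ?thesis by linarith
qed

lemma LRC_dimension_le:
  fixes C :: "(nat \<Rightarrow> 'a) set"
  assumes Q: "finite Q" "card Q \<ge> 2" and LRC: "is_LRC Q n k r \<delta> C" and md: "has_min_dist {1..n} C d"
    and N: "N = r + \<delta> - 1" "N \<ge> 1" and rate: "rate_bounded Q N \<delta> (f / real N)"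
  shows "k \<le> real_of_int (\<lceil>(real n - (real d - 1)) / real N\<rceil> + 1) * f"
proof -
  define q where "q = real (card Q)"
  have q: "q > 1" using Q(2) unfolding q_def by simp
  have C: "C \<subseteq> PiE {1..n} (\<lambda>_. Q)" and card_C: "real (card C) = q powr k"
    and local: "\<And>i. i \<in> {1..n} \<Longrightarrow> \<exists>R. i \<in> R \<and> R \<subseteq> {1..n} \<and> card R \<le> N \<and> min_dist_ge R (proj C R) \<delta>"
    using LRC N(1) unfolding is_LRC_def is_code_def q_def by auto
  have f: "f \<ge> 0" using rate_bounded_nonneg[OF rate N(2) Q(2)] N(2) by (simp add: zero_le_divide_iff)
  have d: "1 \<le> d" "d \<le> n" using has_min_dist_bounds[OF C md] by auto
  have "n - d + 1 \<le> card {1..n}" using d by simp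
  obtain U where U: "U \<subseteq> {1..n}" "n - d + 1 \<le> card U" "card U \<le> n - d + 1 + N - 1"
    "real (card (proj C U)) \<le> q powr (f / real N * real (card U))"
    using exists_proj_card_le_powr[OF rate N(2) Q(1) _ finite_atLeastAtMost C local \<open>n - d + 1 \<le> card {1..n}\<close>] Q(2)
    unfolding q_def by fastforce
  have "card ({1..n} - U) < d" using U(1,2) d by (simp add: card_Diff_subset finite_subset)
  hence "inj_on (\<lambda>x. restrict x U) C"
    using md unfolding has_min_dist_def by (intro inj_on_restrict_min_dist) auto
  hence "card (proj C U) = card C" unfolding proj_def by (rule card_image)
  hence "k \<le> f / real N * real (card U)" using U(4) card_C q by simp
  also have "\<dots> \<le> f / real N * (real n - (real d - 1) + real N - 1)"
  proof -
    have "card U \<le> n + N - d" using U(3) d by linarith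
    hence "real (card U) \<le> real n - (real d - 1) + real N - 1" using d by linarith
    thus ?thesis using f by (intro mult_left_mono) auto
  qed
  also have "\<dots> = f * ((real n - (real d - 1) + real N - 1) / real N)" by simp
  also have "\<dots> \<le> f * real_of_int (\<lceil>(real n - (real d - 1)) / real N\<rceil> + 1)"
    using f N(2) by (intro mult_left_mono add_div_le_ceiling_add_1) auto
  finally show ?thesis by (simp add: mult.commute)
qed

theorem corollary1:
  fixes Q :: "'a set" and q n r \<rho> d :: nat and k :: real and C :: "(nat \<Rightarrow> 'a) set"
  assumes "finite Q" and "card Q = q" and "q \<ge> 2" and "r \<ge> 1" and "\<rho> \<ge> 2"
    and "is_LRC Q n k r \<rho> C"
    and "has_min_dist {1..n} C d"
  defines "N \<equiv> r + \<rho> - 1"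
  defines "\<mu> \<equiv> \<lceil>(real n - (real d - 1)) / real N\<rceil> + 1"
  shows "(k \<le> real_of_int \<mu> * (real N - log q (\<Sum>e = 0..(\<rho> - 1) div 2. real (N choose e) * (real q - 1) ^ e))) \<and>
         (\<rho> > (real q - 1) / real q * real N \<longrightarrow>
           k \<le> real_of_int \<mu> * log q (real \<rho> / (real \<rho> - (real q - 1) / real q * real N))) \<and>
         k \<le> real_of_int \<mu> * real r"
proof -
  have N: "N \<ge> 1" using assms(4,5) unfolding N_def by simp
  have Q: "finite Q" "card Q \<ge> 2" using assms(1-3) by auto
  have bound: "k \<le> real_of_int \<mu> * f" if "rate_bounded Q N \<rho> (f / real N)" for f
    unfolding \<mu>_def using LRC_dimension_le[OF Q assms(6,7) N_def[THEN meta_eq_to_obj_eq] N that] .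
  have "(\<Sum>e = 0..(\<rho> - 1) div 2. real (N choose e) * (real q - 1) ^ e)
      = hamming_vol (real (card Q) - 1) (Suc ((\<rho> - 1) div 2)) N"
    unfolding hamming_vol_def lessThan_Suc_atMost atLeast0AtMost assms(2) ..
  moreover have "2 * ((\<rho> - 1) div 2) + 1 \<le> \<rho>" using assms(5) by linarith
  ultimately have hamming: "rate_bounded Q N \<rho>
      ((real N - log q (\<Sum>e = 0..(\<rho> - 1) div 2. real (N choose e) * (real q - 1) ^ e)) / real N)"
    using rate_bounded_hamming[OF Q _ N] assms(2) by simp
  have plotkin: "rate_bounded Q N \<rho> (log q (real \<rho> / (real \<rho> - (real q - 1) / real q * real N)) / real N)"
    if "\<rho> > (real q - 1) / real q * real N"
    using rate_bounded_plotkin[OF Q N] that assms(2) by simp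
  have singleton: "rate_bounded Q N \<rho> (real r / real N)"
    unfolding N_def using rate_bounded_singleton[OF Q(1) _ ] Q(2) assms(5) by simp
  show ?thesis using bound[OF hamming] bound[OF plotkin] bound[OF singleton] by blast
qed

end
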